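(* Consider $CP(N)$ with multiplicative rates $\psi(i,j)=2ij$, started from $(N,0,\dots,0)$. Define functions $b_k(t)$, $t\ge0$, $k\ge1$, by $b_1(t)=e^t$ and $$b_k(t)=k\,e^{k^2t}\int_0^t e^{-k^2u}\sum_{i+j=k}b_i(u)b_j(u)\,du,\qquad k\ge2,$$ (sum over ordered pairs of positive integers). These functions do not depend on $N$, and for every $N\ge1$, $t\ge0$ and $\eta=(n_1,\dots,n_N)\in\Omega_N$, $$\mathbb P(X_N^{(\rho)}(t)=\eta)=N!\,e^{-N^2t}\prod_{k=1}^N\frac{(b_k(t))^{n_k}}{k^{n_k}n_k!}.$$
   Context: $\Omega_N$ is the set of partitions $\eta=(n_1,\dots,n_N)$ of $N$ ($\sum_k kn_k=N$). $CP(N)$ is the continuous-time Markov chain on $\Omega_N$ where any two distinct clusters of sizes $i,j$ merge into one of size $i+j$ at rate $\psi(i,j)$; the transition $\eta\to\eta^{(i,j)}$ has rate $n_in_j\psi(i,j)$ for $i\neq j$ and $\frac{n_i(n_i-1)}2\psi(i,i)$ for $i=j$. *)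

theory Defs
  imports "HOL-Analysis.Analysis"
begin

text \<open>A state eta = (n_1,...,n_N) is encoded as a function eta :: nat => nat,
  eta k = n_k = number of clusters of size k; entries outside 1..N are 0.\<close>

definition Omega :: "nat \<Rightarrow> (nat \<Rightarrow> nat) set" where
  "Omega N = {eta. (\<forall>k. (k < 1 \<or> k > N) \<longrightarrow> eta k = 0) \<and> (\<Sum>k=1..N. k * eta k) = N}"

definition init_state :: "nat \<Rightarrow> nat \<Rightarrow> nat" where
  "init_state N = (\<lambda>k. if k = 1 then N else 0)"

definition merge :: "(nat \<Rightarrow> nat) \<Rightarrow> nat \<Rightarrow> nat \<Rightarrow> nat \<Rightarrow> nat" where
  "merge eta i j = (\<lambda>k. eta k - (if k = i then 1 else 0) - (if k = j then 1 else 0)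
                          + (if k = i + j then 1 else 0))"

definition merge_rate :: "(nat \<Rightarrow> nat \<Rightarrow> real) \<Rightarrow> (nat \<Rightarrow> nat) \<Rightarrow> nat \<Rightarrow> nat \<Rightarrow> real" where
  "merge_rate psi eta i j =
     (if i \<noteq> j then real (eta i) * real (eta j) * psi i j
      else real (eta i) * (real (eta i) - 1) / 2 * psi i i)"

definition merge_pairs :: "nat \<Rightarrow> (nat \<times> nat) set" where
  "merge_pairs N = {(i, j). 1 \<le> i \<and> i \<le> j \<and> j \<le> N}"

definition generator :: "(nat \<Rightarrow> nat \<Rightarrow> real) \<Rightarrow> nat \<Rightarrow> (nat \<Rightarrow> nat) \<Rightarrow> (nat \<Rightarrow> nat) \<Rightarrow> real" where
  "generator psi N eta eta' =
     (\<Sum>(i, j)\<in>merge_pairs N. if merge eta i j = eta' then merge_rate psi eta i j else 0)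
     - (if eta = eta' then (\<Sum>(i, j)\<in>merge_pairs N. merge_rate psi eta i j) else 0)"

fun gen_pow :: "(nat \<Rightarrow> nat \<Rightarrow> real) \<Rightarrow> nat \<Rightarrow> nat \<Rightarrow> (nat \<Rightarrow> nat) \<Rightarrow> (nat \<Rightarrow> nat) \<Rightarrow> real" where
  "gen_pow psi N 0 eta eta' = (if eta = eta' then 1 else 0)"
| "gen_pow psi N (Suc m) eta eta' =
     (\<Sum>zeta\<in>Omega N. generator psi N eta zeta * gen_pow psi N m zeta eta')"

text \<open>Transition function P(t) = exp(tQ) of the finite-state continuous-time Markov chain CP(N):
  trans_prob psi N t eta0 eta = P(X(t) = eta | X(0) = eta0).\<close>
definition trans_prob :: "(nat \<Rightarrow> nat \<Rightarrow> real) \<Rightarrow> nat \<Rightarrow> real \<Rightarrow> (nat \<Rightarrow> nat) \<Rightarrow> (nat \<Rightarrow> nat) \<Rightarrow> real" where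
  "trans_prob psi N t eta0 eta = (\<Sum>m. t ^ m / fact m * gen_pow psi N m eta0 eta)"

function bfun :: "nat \<Rightarrow> real \<Rightarrow> real" where
  "bfun k t = (if k = 0 then 0 else if k = 1 then exp t
     else real k * exp (real (k^2) * t) *
          integral {0..t} (\<lambda>u. exp (- real (k^2) * u) * (\<Sum>i\<in>{1..k-1}. bfun i u * bfun (k - i) u)))"
  by auto
termination
  by (relation "Wellfounded.measure fst") auto

end

theory Submission
  imports Defs
begin

text \<open>
  The transition probabilities solve the Kolmogorov forward equation p' = p Q, a linear system on
  the finite set Omega N whose solution is determined by p(0); so it suffices to show that the
  product form N! exp(-N^2 t) prod_k a_k^(n_k) / n_k!, with a_k = b_k / k, satisfies it too.
  For the kernel 2ij the total rate out of eta is N^2 - sum_k k^2 n_k: the N^2 is absorbed by the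
  exponential prefactor and the k^2 n_k by the linear part of a_k' = k^2 a_k + sum_(i+j=k) b_i b_j.
  A merge of sizes i and j into eta has a unique predecessor state, and the inflow from it is
  b_i b_j times the partial derivative of the product in a_(i+j); summing over i + j = k gives the
  convolution part of a_k'. Uniqueness follows from a Gronwall argument for sum_eta (p - q)^2.
\<close>

declare bfun.simps [simp del]

section \<open>The functions b_k\<close>

definition bconv :: "nat \<Rightarrow> real \<Rightarrow> real" where
  "bconv k t = (\<Sum>i\<in>{1..k-1}. bfun i t * bfun (k - i) t)"

lemma bfun_1 [simp]: "bfun (Suc 0) t = exp t"
  by (subst bfun.simps) simp

lemma bfun_eq_integral:
  "k \<ge> 2 \<Longrightarrow> bfun k t =
     real k * exp (real (k^2) * t) * integral {0..t} (\<lambda>u. exp (- real (k^2) * u) * bconv k u)"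
  by (subst bfun.simps) (simp add: bconv_def)

lemma bfun_has_real_derivative:
  "1 \<le> k \<Longrightarrow> x \<in> {0..T} \<Longrightarrow>
    (bfun k has_real_derivative real (k^2) * bfun k x + real k * bconv k x) (at x within {0..T})"
proof (induction k arbitrary: x rule: less_induct)
  case (less k)
  show ?case
  proof (cases "k = 1")
    case True
    then show ?thesis
      by (auto simp: bconv_def intro!: derivative_eq_intros)
  next
    case False
    with less.prems have k2: "k \<ge> 2" by simp
    have "continuous_on {0..T} (bfun i)" if "1 \<le> i" "i < k" for i
      by (rule DERIV_continuous_on) (rule less.IH[OF that(2,1)])
    then have "continuous_on {0..T} (\<lambda>u. exp (- real (k^2) * u) * bconv k u)"
      unfolding bconv_def by (intro continuous_intros) auto
    from integral_has_vector_derivative[OF this less.prems(2)]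
    have "((\<lambda>u. integral {0..u} (\<lambda>u. exp (- real (k^2) * u) * bconv k u)) has_real_derivative
        exp (- real (k^2) * x) * bconv k x) (at x within {0..T})"
      by (simp add: has_real_derivative_iff_has_vector_derivative)
    moreover have "exp y * exp (- y) = 1" for y :: real
      by (simp add: exp_minus_inverse)
    ultimately show ?thesis
      unfolding bfun_eq_integral[OF k2, abs_def]
      by (auto intro!: derivative_eq_intros simp: algebra_simps)
  qed
qed

definition afun :: "nat \<Rightarrow> real \<Rightarrow> real" where
  "afun k t = bfun k t / real k"

lemma bconv_eq_afun:
  "bconv k t = (\<Sum>i\<in>{1..k-1}. real i * real (k - i) * afun i t * afun (k - i) t)"
  unfolding bconv_def afun_def by (intro sum.cong) auto

lemma afun_has_real_derivative:
  assumes "1 \<le> k" "x \<in> {0..T}"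
  shows "(afun k has_real_derivative real (k^2) * afun k x + bconv k x) (at x within {0..T})"
proof -
  have "((\<lambda>t. bfun k t / real k) has_real_derivative
      (real (k^2) * bfun k x + real k * bconv k x) / real k) (at x within {0..T})"
    by (rule DERIV_cdivide) (rule bfun_has_real_derivative[OF assms])
  moreover have "(real (k^2) * bfun k x + real k * bconv k x) / real k = real (k^2) * afun k x + bconv k x"
    using assms(1) by (simp add: afun_def field_simps)
  ultimately show ?thesis
    by (simp add: afun_def[abs_def])
qed

lemma afun_at_0: "afun (Suc 0) 0 = 1" "k \<ge> 2 \<Longrightarrow> afun k 0 = 0"
  by (auto simp: afun_def bfun_eq_integral)

section \<open>The state space\<close>

lemma Omega_outside_zero: "eta \<in> Omega N \<Longrightarrow> k \<notin> {1..N} \<Longrightarrow> eta k = 0"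
  unfolding Omega_def by (auto simp: not_le less_Suc_eq_0_disj)

lemma Omega_finite: "finite (Omega N)"
proof (rule finite_subset)
  show "Omega N \<subseteq> {f. \<forall>x. (x \<in> {1..N} \<longrightarrow> f x \<in> {0..N}) \<and> (x \<notin> {1..N} \<longrightarrow> f x = 0)}"
  proof safe
    fix f x assume f: "f \<in> Omega N" and x: "x \<in> {1..N}"
    have "f x \<le> x * f x" using x by simp
    also have "\<dots> \<le> (\<Sum>k=1..N. k * f k)"
      by (rule member_le_sum) (use x in auto)
    finally show "f x \<in> {0..N}" using f by (simp add: Omega_def)
  qed (auto intro: Omega_outside_zero)
  show "finite {f. \<forall>x. (x \<in> {1..N} \<longrightarrow> f x \<in> {0..N}) \<and> (x \<notin> {1..N} \<longrightarrow> f x = (0::nat))}"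
    by (rule finite_set_of_finite_funs) auto
qed

lemma init_state_in_Omega: "init_state N \<in> Omega N"
proof -
  have "(\<Sum>k=1..N. k * init_state N k) = (\<Sum>k\<in>{1..N}. if k = 1 then N else 0)"
    by (intro sum.cong) (auto simp: init_state_def)
  then show ?thesis
    by (cases "N = 0") (auto simp: Omega_def init_state_def)
qed

lemma Omega_eq_init_state:
  assumes eta: "eta \<in> Omega N" and small: "\<And>l. l \<in> {2..N} \<Longrightarrow> eta l = 0"
  shows "eta = init_state N"
proof -
  have "(\<Sum>k=1..N. k * eta k) = (\<Sum>k\<in>{1..N}. if k = 1 then eta 1 else 0)"
    by (intro sum.cong) (use small in \<open>auto simp: not_le\<close>)
  then have "eta 1 = N"
    using eta by (cases "N = 0") (auto simp: Omega_def)
  moreover have "eta k = 0" if "k \<noteq> 1" for k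
    using Omega_outside_zero[OF eta, of k] small[of k] that by (cases "k \<in> {2..N}") auto
  ultimately show ?thesis
    by (auto simp: init_state_def)
qed

section \<open>The transition function\<close>

lemma gen_pow_Suc_right:
  assumes "a \<in> Omega N" "b \<in> Omega N"
  shows "gen_pow psi N (Suc m) a b = (\<Sum>z\<in>Omega N. gen_pow psi N m a z * generator psi N z b)"
  using assms(1)
proof (induction m arbitrary: a)
  case 0
  then show ?case
    using assms(2) Omega_finite[of N]
    by (simp add: if_distrib[of "\<lambda>x. _ * x"] if_distrib[of "\<lambda>x. x * _"] cong: if_cong)
next
  case (Suc m)
  have "gen_pow psi N (Suc (Suc m)) a b =
      (\<Sum>z\<in>Omega N. generator psi N a z * (\<Sum>y\<in>Omega N. gen_pow psi N m z y * generator psi N y b))"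
    by (simp only: gen_pow.simps(2)[of psi N "Suc m"]) (rule sum.cong[OF refl], simp only: Suc.IH)
  also have "\<dots> = (\<Sum>y\<in>Omega N. \<Sum>z\<in>Omega N. generator psi N a z * gen_pow psi N m z y * generator psi N y b)"
    by (subst sum.swap) (simp add: sum_distrib_left mult.assoc)
  also have "\<dots> = (\<Sum>y\<in>Omega N. gen_pow psi N (Suc m) a y * generator psi N y b)"
    by (simp add: sum_distrib_right)
  finally show ?case .
qed

lemma gen_pow_abs_le:
  "a \<in> Omega N \<Longrightarrow>
    \<bar>gen_pow psi N m a b\<bar> \<le> (\<Sum>z\<in>Omega N. \<Sum>y\<in>Omega N. \<bar>generator psi N z y\<bar>) ^ m"
proof (induction m arbitrary: a)
  case (Suc m)
  define K where "K = (\<Sum>z\<in>Omega N. \<Sum>y\<in>Omega N. \<bar>generator psi N z y\<bar>)"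
  have row: "(\<Sum>z\<in>Omega N. \<bar>generator psi N a z\<bar>) \<le> K"
    unfolding K_def using Suc.prems Omega_finite
    by (intro member_le_sum[where f = "\<lambda>z. \<Sum>y\<in>Omega N. \<bar>generator psi N z y\<bar>"]) (auto intro: sum_nonneg)
  have "\<bar>gen_pow psi N (Suc m) a b\<bar> \<le> (\<Sum>z\<in>Omega N. \<bar>generator psi N a z\<bar> * \<bar>gen_pow psi N m z b\<bar>)"
    by (simp add: sum_abs[THEN order_trans] abs_mult)
  also have "\<dots> \<le> (\<Sum>z\<in>Omega N. \<bar>generator psi N a z\<bar> * K ^ m)"
    unfolding K_def by (intro sum_mono mult_left_mono Suc.IH) auto
  also have "\<dots> = (\<Sum>z\<in>Omega N. \<bar>generator psi N a z\<bar>) * K ^ m"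
    by (simp add: sum_distrib_right)
  also have "\<dots> \<le> K * K ^ m"
    using row by (rule mult_right_mono) (simp add: K_def sum_nonneg)
  finally show ?case by (simp add: K_def)
qed simp

lemma summable_trans_prob_series:
  assumes "a \<in> Omega N"
  shows "summable (\<lambda>m. t ^ m / fact m * gen_pow psi N m a b)"
proof (rule summable_comparison_test)
  define K where "K = (\<Sum>z\<in>Omega N. \<Sum>y\<in>Omega N. \<bar>generator psi N z y\<bar>)"
  show "summable (\<lambda>m. (K * \<bar>t\<bar>) ^ m / fact m)"
    using summable_exp_generic[of "K * \<bar>t\<bar>"] by (simp add: field_simps)
  have "norm (t ^ m / fact m * gen_pow psi N m a b) \<le> (K * \<bar>t\<bar>) ^ m / fact m" for m
  proof -
    have "norm (t ^ m / fact m * gen_pow psi N m a b) = \<bar>t\<bar> ^ m / fact m * \<bar>gen_pow psi N m a b\<bar>"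
      by (simp add: abs_mult power_abs)
    also have "\<dots> \<le> \<bar>t\<bar> ^ m / fact m * K ^ m"
      unfolding K_def by (intro mult_left_mono gen_pow_abs_le assms) auto
    finally show ?thesis by (simp add: power_mult_distrib mult_ac)
  qed
  then show "\<exists>M. \<forall>m\<ge>M. norm (t ^ m / fact m * gen_pow psi N m a b) \<le> (K * \<bar>t\<bar>) ^ m / fact m"
    by blast
qed

lemma trans_prob_0: "trans_prob psi N 0 a b = (if a = b then 1 else 0)"
proof -
  have "trans_prob psi N 0 a b = (\<Sum>m. gen_pow psi N m a b / fact m * 0 ^ m)"
    unfolding trans_prob_def by (intro suminf_cong) simp
  also have "\<dots> = gen_pow psi N 0 a b / fact 0"
    by (rule powser_zero)
  finally show ?thesis by simp
qed

lemma trans_prob_forward_equation: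
  assumes a: "a \<in> Omega N" and b: "b \<in> Omega N"
  shows "((\<lambda>t. trans_prob psi N t a b) has_real_derivative
          (\<Sum>z\<in>Omega N. trans_prob psi N t a z * generator psi N z b)) (at t)"
proof -
  define c where "c m = gen_pow psi N m a b / fact m" for m
  have "summable (\<lambda>m. c m * y ^ m)" for y :: real
    using summable_trans_prob_series[OF a, of y psi b] unfolding c_def by (simp add: mult_ac)
  then have deriv: "((\<lambda>t. \<Sum>m. c m * t ^ m) has_real_derivative (\<Sum>m. diffs c m * t ^ m)) (at t)"
    by (rule termdiffs_strong_converges_everywhere)
  have series: "(\<lambda>t. \<Sum>m. c m * t ^ m) = (\<lambda>t. trans_prob psi N t a b)"
    unfolding trans_prob_def c_def by (intro ext suminf_cong) simp
  have "diffs c m * t ^ m = t ^ m / fact m * gen_pow psi N (Suc m) a b" for m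
    unfolding diffs_def c_def by (simp del: gen_pow.simps of_nat_Suc)
  then have "(\<Sum>m. diffs c m * t ^ m) = (\<Sum>m. \<Sum>z\<in>Omega N. t ^ m / fact m * gen_pow psi N m a z * generator psi N z b)"
    by (intro suminf_cong) (simp only: gen_pow_Suc_right[OF a b] sum_distrib_left mult.assoc)
  also have "\<dots> = (\<Sum>z\<in>Omega N. \<Sum>m. t ^ m / fact m * gen_pow psi N m a z * generator psi N z b)"
    by (rule suminf_sum) (intro summable_mult2 summable_trans_prob_series a)
  also have "\<dots> = (\<Sum>z\<in>Omega N. trans_prob psi N t a z * generator psi N z b)"
    unfolding trans_prob_def by (intro sum.cong refl suminf_mult2[symmetric] summable_trans_prob_series a)
  finally show ?thesis
    using deriv series by simp
qed

section \<open>Uniqueness for finite linear systems\<close>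

lemma bilinear_form_le_sum_squares:
  fixes d :: "'a \<Rightarrow> real"
  assumes "finite A"
  shows "(\<Sum>e\<in>A. 2 * d e * (\<Sum>z\<in>A. d z * Q z e))
           \<le> 2 * (\<Sum>e\<in>A. \<Sum>z\<in>A. \<bar>Q z e\<bar>) * (\<Sum>e\<in>A. (d e)^2)"
proof -
  have sq: "(d e)^2 \<le> (\<Sum>e\<in>A. (d e)^2)" if "e \<in> A" for e
    by (rule member_le_sum) (use that assms in auto)
  have "2 * d e * d z * Q z e \<le> \<bar>Q z e\<bar> * (2 * (\<Sum>e\<in>A. (d e)^2))" if "e \<in> A" "z \<in> A" for e z
  proof -
    have "2 * d e * d z * Q z e \<le> \<bar>2 * d e * d z\<bar> * \<bar>Q z e\<bar>"
      by (metis abs_ge_self abs_mult)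
    also have "\<dots> \<le> ((d e)^2 + (d z)^2) * \<bar>Q z e\<bar>"
    proof (rule mult_right_mono)
      have "0 \<le> (\<bar>d e\<bar> - \<bar>d z\<bar>)^2" by simp
      then show "\<bar>2 * d e * d z\<bar> \<le> (d e)^2 + (d z)^2"
        by (simp add: power2_eq_square algebra_simps abs_mult)
    qed simp
    also have "\<dots> \<le> (2 * (\<Sum>e\<in>A. (d e)^2)) * \<bar>Q z e\<bar>"
      using sq[OF that(1)] sq[OF that(2)] by (intro mult_right_mono) auto
    finally show ?thesis by (simp add: mult_ac)
  qed
  then have "(\<Sum>e\<in>A. \<Sum>z\<in>A. 2 * d e * d z * Q z e) \<le> (\<Sum>e\<in>A. \<Sum>z\<in>A. \<bar>Q z e\<bar> * (2 * (\<Sum>e\<in>A. (d e)^2)))"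
    by (intro sum_mono) auto
  then show ?thesis
    by (simp add: sum_distrib_left sum_distrib_right mult_ac)
qed

lemma nonneg_zero_if_derivative_le:
  fixes g :: "real \<Rightarrow> real"
  assumes "0 \<le> T" and nonneg: "\<And>x. x \<in> {0..T} \<Longrightarrow> 0 \<le> g x" and "g 0 = 0"
    and deriv: "\<And>x. x \<in> {0..T} \<Longrightarrow> (g has_real_derivative g' x) (at x within {0..T})"
    and bound: "\<And>x. x \<in> {0..T} \<Longrightarrow> g' x \<le> C * g x"
  shows "g T = 0"
proof -
  define h where "h x = g x * exp (- C * x)" for x
  have dh: "(h has_real_derivative (g' x - C * g x) * exp (- C * x)) (at x within {0..T})"
    if "x \<in> {0..T}" for x
    unfolding h_def by (rule derivative_eq_intros deriv that refl)+ (simp add: algebra_simps)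
  have "h T \<le> h 0"
  proof (rule DERIV_nonpos_imp_decreasing_open[OF \<open>0 \<le> T\<close>])
    show "continuous_on {0..T} h"
      by (rule DERIV_continuous_on[OF dh])
    fix x assume x: "0 < x" "x < T"
    then have "(h has_real_derivative (g' x - C * g x) * exp (- C * x)) (at x)"
      using dh[of x] by (simp add: at_within_Icc_at)
    moreover have "(g' x - C * g x) * exp (- C * x) \<le> 0"
      using bound[of x] x by (simp add: mult_nonpos_nonneg)
    ultimately show "\<exists>y. (h has_real_derivative y) (at x) \<and> y \<le> 0" by blast
  qed
  then have "g T \<le> 0"
    using \<open>g 0 = 0\<close> by (simp add: h_def mult_le_0_iff)
  then show ?thesis
    using nonneg[of T] \<open>0 \<le> T\<close> by simp
qed

lemma linear_system_unique:
  fixes p q :: "real \<Rightarrow> 'a \<Rightarrow> real" and Q :: "'a \<Rightarrow> 'a \<Rightarrow> real"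
  assumes "0 \<le> T" and fin: "finite A"
    and dp: "\<And>e x. e \<in> A \<Longrightarrow> x \<in> {0..T} \<Longrightarrow>
       ((\<lambda>s. p s e) has_real_derivative (\<Sum>z\<in>A. p x z * Q z e)) (at x within {0..T})"
    and dq: "\<And>e x. e \<in> A \<Longrightarrow> x \<in> {0..T} \<Longrightarrow>
       ((\<lambda>s. q s e) has_real_derivative (\<Sum>z\<in>A. q x z * Q z e)) (at x within {0..T})"
    and init: "\<And>e. e \<in> A \<Longrightarrow> p 0 e = q 0 e"
    and "e \<in> A"
  shows "p T e = q T e"
proof -
  define d where "d s e = p s e - q s e" for s e
  have dd: "((\<lambda>s. d s e) has_real_derivative (\<Sum>z\<in>A. d x z * Q z e)) (at x within {0..T})"
    if "e \<in> A" "x \<in> {0..T}" for e x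
    unfolding d_def
    by (rule derivative_eq_intros dp dq that refl)+ (simp add: sum_subtractf[symmetric] left_diff_distrib)
  define g where "g s = (\<Sum>e\<in>A. (d s e)^2)" for s
  have "g T = 0"
  proof (rule nonneg_zero_if_derivative_le[OF \<open>0 \<le> T\<close>])
    show "0 \<le> g x" for x
      unfolding g_def by (intro sum_nonneg) auto
    show "g 0 = 0"
      unfolding g_def d_def using init by simp
    show "(g has_real_derivative (\<Sum>e\<in>A. 2 * d x e * (\<Sum>z\<in>A. d x z * Q z e))) (at x within {0..T})"
      if "x \<in> {0..T}" for x
      unfolding g_def by (rule derivative_eq_intros dd that refl | simp add: mult_ac)+
    show "(\<Sum>e\<in>A. 2 * d x e * (\<Sum>z\<in>A. d x z * Q z e)) \<le> 2 * (\<Sum>e\<in>A. \<Sum>z\<in>A. \<bar>Q z e\<bar>) * g x" for x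
      unfolding g_def by (rule bilinear_form_le_sum_squares[OF fin])
  qed
  then show ?thesis
    using fin \<open>e \<in> A\<close> by (simp add: g_def d_def sum_nonneg_eq_0_iff)
qed

section \<open>The product form\<close>

definition exp_term :: "real \<Rightarrow> nat \<Rightarrow> real" where
  "exp_term x n = x ^ n / fact n"

lemma exp_term_Suc: "exp_term x (Suc n) = x * exp_term x n / real (Suc n)"
  unfolding exp_term_def by (simp add: field_simps del: of_nat_Suc)

lemma exp_term_pred: "1 \<le> n \<Longrightarrow> exp_term x (n - 1) = real n * x ^ (n - 1) / fact n"
  unfolding exp_term_def by (subst (2) fact_reduce) auto

lemma exp_term_has_real_derivative:
  "(f has_real_derivative f') (at x within S) \<Longrightarrow>
    ((\<lambda>t. exp_term (f t) n) has_real_derivative f' * (real n * f x ^ (n - 1) / fact n)) (at x within S)"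
  unfolding exp_term_def using DERIV_cdivide[OF DERIV_power, of f f' x S n "fact n"] by (simp add: mult_ac)

lemma has_field_derivative_prod_within:
  assumes "\<And>i. i \<in> I \<Longrightarrow> (f i has_field_derivative f' i) (at x within S)"
  shows "((\<lambda>x. \<Prod>i\<in>I. f i x) has_field_derivative (\<Sum>i\<in>I. f' i * (\<Prod>j\<in>I - {i}. f j x))) (at x within S)"
proof -
  have "((\<lambda>x. \<Prod>i\<in>I. f i x) has_derivative
      (\<lambda>y. \<Sum>i\<in>I. y * f' i * (\<Prod>j\<in>I - {i}. f j x))) (at x within S)"
    using assms by (intro has_derivative_prod) (simp add: has_field_derivative_def mult_commute_abs)
  moreover have "(\<lambda>y. \<Sum>i\<in>I. y * f' i * (\<Prod>j\<in>I - {i}. f j x)) =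
      (*) (\<Sum>i\<in>I. f' i * (\<Prod>j\<in>I - {i}. f j x))"
    by (simp add: fun_eq_iff sum_distrib_left sum_distrib_right mult_ac)
  ultimately show ?thesis
    unfolding has_field_derivative_def by simp
qed

definition weight :: "nat \<Rightarrow> (nat \<Rightarrow> nat) \<Rightarrow> real \<Rightarrow> real" where
  "weight N eta t = (\<Prod>l\<in>{1..N}. exp_term (afun l t) (eta l))"

definition weight_partial :: "nat \<Rightarrow> nat \<Rightarrow> (nat \<Rightarrow> nat) \<Rightarrow> real \<Rightarrow> real" where
  "weight_partial N k eta t =
     real (eta k) * afun k t ^ (eta k - 1) / fact (eta k) * (\<Prod>l\<in>{1..N}-{k}. exp_term (afun l t) (eta l))"

definition product_form :: "nat \<Rightarrow> real \<Rightarrow> (nat \<Rightarrow> nat) \<Rightarrow> real" where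
  "product_form N t eta = fact N * exp (- ((real N)^2 * t)) * weight N eta t"

lemma weight_has_real_derivative:
  assumes "x \<in> {0..T}"
  shows "(weight N eta has_real_derivative
     (\<Sum>k\<in>{1..N}. real (k^2) * real (eta k)) * weight N eta x + (\<Sum>k\<in>{1..N}. bconv k x * weight_partial N k eta x))
     (at x within {0..T})"
proof -
  have "(weight N eta has_real_derivative
     (\<Sum>k\<in>{1..N}. (real (k^2) * afun k x + bconv k x) * (real (eta k) * afun k x ^ (eta k - 1) / fact (eta k))
        * (\<Prod>l\<in>{1..N}-{k}. exp_term (afun l x) (eta l)))) (at x within {0..T})"
    unfolding weight_def[abs_def]
    by (intro has_field_derivative_prod_within exp_term_has_real_derivative afun_has_real_derivative assms) auto
  moreover have "(real (k^2) * afun k x + bconv k x) * (real (eta k) * afun k x ^ (eta k - 1) / fact (eta k))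
        * (\<Prod>l\<in>{1..N}-{k}. exp_term (afun l x) (eta l))
     = real (k^2) * real (eta k) * weight N eta x + bconv k x * weight_partial N k eta x"
    if "k \<in> {1..N}" for k
  proof -
    define D where "D = real (eta k) * afun k x ^ (eta k - 1) / fact (eta k)"
    define P where "P = (\<Prod>l\<in>{1..N}-{k}. exp_term (afun l x) (eta l))"
    have aD: "afun k x * D = real (eta k) * exp_term (afun k x) (eta k)"
      unfolding D_def by (cases "eta k") (simp_all add: exp_term_def)
    have "weight N eta x = exp_term (afun k x) (eta k) * P"
      unfolding weight_def P_def using that by (simp add: prod.remove)
    moreover have "weight_partial N k eta x = D * P"
      unfolding weight_partial_def D_def P_def ..
    moreover have "(real (k^2) * afun k x + bconv k x) * D * P = real (k^2) * (afun k x * D) * P + bconv k x * (D * P)"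
      by (simp add: algebra_simps)
    ultimately show ?thesis
      unfolding D_def[symmetric] P_def[symmetric] aD by (simp add: algebra_simps)
  qed
  ultimately show ?thesis
    by (simp add: sum.distrib sum_distrib_right)
qed

lemma product_form_has_real_derivative:
  assumes "x \<in> {0..T}"
  shows "((\<lambda>t. product_form N t eta) has_real_derivative
     fact N * exp (- ((real N)^2 * x)) *
     (((\<Sum>k\<in>{1..N}. real (k^2) * real (eta k)) - (real N)^2) * weight N eta x
       + (\<Sum>k\<in>{1..N}. bconv k x * weight_partial N k eta x)))
     (at x within {0..T})"
  unfolding product_form_def
  by (rule derivative_eq_intros weight_has_real_derivative[OF assms] refl)+ (simp add: algebra_simps)

lemma product_form_0:
  assumes "eta \<in> Omega N"
  shows "product_form N 0 eta = (if eta = init_state N then 1 else 0)"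
proof (cases "eta = init_state N")
  case True
  have "weight N eta 0 = (\<Prod>l\<in>{1..N}. if l = 1 then 1 / fact N else 1)"
    unfolding weight_def by (intro prod.cong) (auto simp: True init_state_def exp_term_def afun_at_0)
  then show ?thesis
    using True by (cases "N = 0") (simp_all add: product_form_def)
next
  case False
  then obtain l where l: "l \<in> {2..N}" "eta l \<noteq> 0"
    using Omega_eq_init_state[OF assms] by blast
  then have "exp_term (afun l 0) (eta l) = 0"
    by (simp add: afun_at_0 exp_term_def)
  then have "weight N eta 0 = 0"
    unfolding weight_def using l(1) by (intro prod_zero) auto
  then show ?thesis
    using False by (simp add: product_form_def)
qed

section \<open>The forward equation for multiplicative rates\<close>

lemma sum_merge_pairs_symmetrize:
  fixes x :: "nat \<Rightarrow> nat \<Rightarrow> 'a::comm_monoid_add"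
  shows "(\<Sum>(i,j)\<in>merge_pairs N. if i = j then x i i else x i j + x j i) = (\<Sum>i\<in>{1..N}. \<Sum>j\<in>{1..N}. x i j)"
proof -
  have "merge_pairs N = (SIGMA i:{1..N}. {i..N})"
    unfolding merge_pairs_def by auto
  then have "(\<Sum>(i,j)\<in>merge_pairs N. if i = j then x i i else x i j + x j i)
      = (\<Sum>i\<in>{1..N}. \<Sum>j\<in>{i..N}. if i = j then x i i else x i j + x j i)"
    by (simp add: sum.Sigma)
  also have "\<dots> = (\<Sum>i\<in>{1..N}. \<Sum>j\<in>{1..N}. x i j)"
  proof (induction N)
    case (Suc N)
    have "(\<Sum>i\<in>{1..Suc N}. \<Sum>j\<in>{i..Suc N}. if i = j then x i i else x i j + x j i)
        = (\<Sum>i\<in>{1..N}. (\<Sum>j\<in>{i..N}. if i = j then x i i else x i j + x j i) + (x i (Suc N) + x (Suc N) i))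
          + x (Suc N) (Suc N)"
      by (simp add: atLeastAtMostSuc_conv add.commute)
    also have "\<dots> = (\<Sum>i\<in>{1..Suc N}. \<Sum>j\<in>{1..Suc N}. x i j)"
      using Suc.IH by (simp add: sum.distrib ac_simps)
    finally show ?case .
  qed simp
  finally show ?thesis .
qed

lemma sum_square_by_sum_of_indices:
  fixes y :: "nat \<Rightarrow> nat \<Rightarrow> 'a::comm_semiring_0" and B :: "nat \<Rightarrow> 'a"
  assumes "\<And>k. N < k \<Longrightarrow> B k = 0"
  shows "(\<Sum>i\<in>{1..N}. \<Sum>j\<in>{1..N}. y i j * B (i + j)) = (\<Sum>k\<in>{1..N}. (\<Sum>i\<in>{1..k-1}. y i (k - i)) * B k)"
proof -
  have "(\<Sum>k\<in>{1..N}. (\<Sum>i\<in>{1..k-1}. y i (k - i)) * B k) = (\<Sum>k\<in>{1..N}. \<Sum>i\<in>{i\<in>{1..N}. i < k}. y i (k - i) * B k)"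
    by (intro sum.cong) (auto simp: sum_distrib_right intro!: sum.cong)
  also have "\<dots> = (\<Sum>i\<in>{1..N}. \<Sum>k\<in>{k\<in>{1..N}. i < k}. y i (k - i) * B k)"
    by (rule sum.swap_restrict) auto
  also have "\<dots> = (\<Sum>i\<in>{1..N}. \<Sum>j\<in>{1..N}. y i j * B (i + j))"
  proof (rule sum.cong[OF refl])
    fix i assume "i \<in> {1..N}"
    have "(\<Sum>k\<in>{k\<in>{1..N}. i < k}. y i (k - i) * B k) = (\<Sum>j\<in>{j\<in>{1..N}. i + j \<le> N}. y i j * B (i + j))"
      by (rule sum.reindex_bij_witness[of _ "\<lambda>j. i + j" "\<lambda>k. k - i"]) auto
    also have "\<dots> = (\<Sum>j\<in>{1..N}. y i j * B (i + j))"
      by (rule sum.mono_neutral_left) (auto, metis assms mult_zero_right not_le)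
    finally show "(\<Sum>k\<in>{k\<in>{1..N}. i < k}. y i (k - i) * B k) = (\<Sum>j\<in>{1..N}. y i j * B (i + j))" .
  qed
  finally show ?thesis ..
qed

definition mult_kernel :: "nat \<Rightarrow> nat \<Rightarrow> real" where
  "mult_kernel i j = 2 * real i * real j"

lemma total_merge_rate_mult_kernel:
  assumes "eta \<in> Omega N"
  shows "(\<Sum>(i,j)\<in>merge_pairs N. merge_rate mult_kernel eta i j)
           = (real N)^2 - (\<Sum>k\<in>{1..N}. real (k^2) * real (eta k))"
proof -
  define x where "x i j = real i * real (eta i) * (real j * real (eta j))
      - (if i = j then real (i^2) * real (eta i) else 0)" for i j
  have "(\<Sum>(i,j)\<in>merge_pairs N. merge_rate mult_kernel eta i j)
      = (\<Sum>(i,j)\<in>merge_pairs N. if i = j then x i i else x i j + x j i)"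
    by (intro sum.cong refl) (auto simp: merge_rate_def mult_kernel_def x_def power2_eq_square field_simps)
  also have "\<dots> = (\<Sum>i\<in>{1..N}. real i * real (eta i)) * (\<Sum>j\<in>{1..N}. real j * real (eta j))
      - (\<Sum>i\<in>{1..N}. real (i^2) * real (eta i))"
    by (simp add: sum_merge_pairs_symmetrize x_def sum_subtractf sum_product)
  also have "(\<Sum>i\<in>{1..N}. real i * real (eta i)) = real N"
    using assms unfolding Omega_def by (metis (mono_tags, lifting) mem_Collect_eq of_nat_mult of_nat_sum sum.cong)
  finally show ?thesis
    by (simp add: power2_eq_square)
qed

definition unmerge :: "(nat \<Rightarrow> nat) \<Rightarrow> nat \<Rightarrow> nat \<Rightarrow> nat \<Rightarrow> nat" where
  "unmerge eta i j = (\<lambda>l. eta l + (if l = i then 1 else 0) + (if l = j then 1 else 0) - (if l = i + j then 1 else 0))"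

lemma merge_at_sum: "1 \<le> i \<Longrightarrow> 1 \<le> j \<Longrightarrow> merge z i j (i + j) = z (i + j) + 1"
  by (simp add: merge_def)

lemma merge_unmerge: "1 \<le> i \<Longrightarrow> 1 \<le> j \<Longrightarrow> eta (i + j) \<noteq> 0 \<Longrightarrow> merge (unmerge eta i j) i j = eta"
  by (auto simp: merge_def unmerge_def fun_eq_iff)

lemma merge_eq_imp_unmerge:
  assumes "merge z i j = eta" "1 \<le> i" "1 \<le> j" "merge_rate mult_kernel z i j \<noteq> 0"
  shows "z = unmerge eta i j"
proof
  fix l
  have "z i \<ge> 1" "z j \<ge> 1" "i = j \<Longrightarrow> z i \<ge> 2"
    using assms(2-4) by (auto simp: merge_rate_def mult_kernel_def split: if_splits)
  then show "z l = unmerge eta i j l"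
    using assms(1,2,3) by (auto simp: merge_def unmerge_def)
qed

lemma unmerge_in_Omega:
  assumes eta: "eta \<in> Omega N" and ij: "(i, j) \<in> merge_pairs N" and "eta (i + j) \<noteq> 0"
  shows "unmerge eta i j \<in> Omega N"
proof -
  have ij': "1 \<le> i" "i \<le> j" "j \<le> N" "i + j \<le> N"
    using ij Omega_outside_zero[OF eta, of "i + j"] \<open>eta (i + j) \<noteq> 0\<close> by (auto simp: merge_pairs_def)
  have pointwise: "l * unmerge eta i j l + (if l = i + j then l else 0)
      = l * eta l + (if l = i then l else 0) + (if l = j then l else 0)" for l
    using \<open>eta (i + j) \<noteq> 0\<close> ij' by (cases "eta (i + j)") (auto simp: unmerge_def algebra_simps)
  have "(\<Sum>l=1..N. l * unmerge eta i j l) + (i + j)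
      = (\<Sum>l=1..N. l * unmerge eta i j l + (if l = i + j then l else 0))"
    using ij' by (simp add: sum.distrib)
  also have "\<dots> = (\<Sum>l=1..N. l * eta l) + (i + j)"
    unfolding pointwise using ij' by (simp add: sum.distrib)
  finally have "(\<Sum>l=1..N. l * unmerge eta i j l) = N"
    using eta by (simp add: Omega_def)
  moreover have "unmerge eta i j l = 0" if "l \<notin> {1..N}" for l
    using that ij' Omega_outside_zero[OF eta that] by (auto simp: unmerge_def)
  ultimately show ?thesis
    by (auto simp: Omega_def)
qed

lemma sum_inflow_mult_kernel:
  assumes eta: "eta \<in> Omega N" and ij: "(i, j) \<in> merge_pairs N"
  shows "(\<Sum>z\<in>Omega N. f z * (if merge z i j = eta then merge_rate mult_kernel z i j else 0))
       = (if eta (i + j) = 0 then 0 else f (unmerge eta i j) * merge_rate mult_kernel (unmerge eta i j) i j)"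
proof -
  have "1 \<le> i" "1 \<le> j"
    using ij by (auto simp: merge_pairs_def)
  show ?thesis
  proof (cases "eta (i + j) = 0")
    case True
    then have "merge z i j \<noteq> eta" for z
      using merge_at_sum[OF \<open>1 \<le> i\<close> \<open>1 \<le> j\<close>, of z] by auto
    with True show ?thesis by simp
  next
    case False
    let ?u = "unmerge eta i j"
    have "(\<Sum>z\<in>Omega N. f z * (if merge z i j = eta then merge_rate mult_kernel z i j else 0))
        = f ?u * merge_rate mult_kernel ?u i j
          + (\<Sum>z\<in>Omega N - {?u}. f z * (if merge z i j = eta then merge_rate mult_kernel z i j else 0))"
      using False \<open>1 \<le> i\<close> \<open>1 \<le> j\<close>
      by (simp add: sum.remove[OF Omega_finite unmerge_in_Omega[OF eta ij False]] merge_unmerge)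
    also have "(\<Sum>z\<in>Omega N - {?u}. f z * (if merge z i j = eta then merge_rate mult_kernel z i j else 0)) = 0"
      using merge_eq_imp_unmerge[OF _ \<open>1 \<le> i\<close> \<open>1 \<le> j\<close>] by (intro sum.neutral) auto
    finally show ?thesis
      using False by simp
  qed
qed

lemma weight_unmerge:
  assumes ij: "(i, j) \<in> merge_pairs N" and "eta (i + j) \<noteq> 0" and "i + j \<le> N"
  shows "weight N (unmerge eta i j) t * merge_rate mult_kernel (unmerge eta i j) i j
       = (if i = j then 1 else 2) * (real i * real j * afun i t * afun j t * weight_partial N (i + j) eta t)"
proof -
  define k where "k = i + j"
  define E where "E l n = exp_term (afun l t) n" for l n
  define D where "D = real (eta k) * afun k t ^ (eta k - 1) / fact (eta k)"
  let ?u = "unmerge eta i j"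
  have ij': "1 \<le> i" "i \<le> j" "j \<le> N" "k \<in> {1..N}" "k \<noteq> i" "k \<noteq> j"
    using ij \<open>i + j \<le> N\<close> by (auto simp: merge_pairs_def k_def)
  have uk: "E k (?u k) = D"
    unfolding E_def D_def using ij' \<open>eta (i + j) \<noteq> 0\<close> exp_term_pred[of "eta k"]
    by (simp add: unmerge_def k_def[symmetric])
  have wk: "weight N ?u t = D * (\<Prod>l\<in>{1..N}-{k}. E l (?u l))"
    unfolding weight_def E_def[symmetric] uk[symmetric] using ij' by (intro prod.remove) auto
  have pk: "weight_partial N k eta t = D * (\<Prod>l\<in>{1..N}-{k}. E l (eta l))"
    unfolding weight_partial_def E_def D_def ..
  have E_Suc: "E l (Suc n) = afun l t * E l n / real (Suc n)" for l n
    unfolding E_def by (rule exp_term_Suc)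
  show ?thesis
  proof (cases "i = j")
    case True
    let ?R = "{1..N} - {k} - {i}"
    have "(\<Prod>l\<in>?R. E l (?u l)) = (\<Prod>l\<in>?R. E l (eta l))"
      using True by (intro prod.cong) (auto simp: unmerge_def k_def)
    moreover have "?u i = Suc (Suc (eta i))"
      using True ij' by (simp add: unmerge_def k_def)
    ultimately have "(\<Prod>l\<in>{1..N}-{k}. E l (?u l)) = E i (Suc (Suc (eta i))) * (\<Prod>l\<in>?R. E l (eta l))"
      using ij' by (simp add: prod.remove[of _ i])
    moreover have "(\<Prod>l\<in>{1..N}-{k}. E l (eta l)) = E i (eta i) * (\<Prod>l\<in>?R. E l (eta l))"
      using ij' by (simp add: prod.remove[of _ i])
    moreover have "merge_rate mult_kernel ?u i j = real (Suc (Suc (eta i))) * real (Suc (eta i)) / 2 * (2 * real i * real i)"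
      using True ij' by (simp add: merge_rate_def mult_kernel_def unmerge_def k_def[symmetric])
    ultimately show ?thesis
      using True unfolding k_def[symmetric] wk pk by (simp add: E_Suc field_simps del: of_nat_Suc)
  next
    case False
    let ?R = "{1..N} - {k} - {i} - {j}"
    have "(\<Prod>l\<in>?R. E l (?u l)) = (\<Prod>l\<in>?R. E l (eta l))"
      by (intro prod.cong) (auto simp: unmerge_def k_def)
    moreover have "?u i = Suc (eta i)" "?u j = Suc (eta j)"
      using False ij' by (auto simp: unmerge_def k_def)
    ultimately have "(\<Prod>l\<in>{1..N}-{k}. E l (?u l)) = E i (Suc (eta i)) * (E j (Suc (eta j)) * (\<Prod>l\<in>?R. E l (eta l)))"
      using ij' False by (simp add: prod.remove[of _ i] prod.remove[of _ j])
    moreover have "(\<Prod>l\<in>{1..N}-{k}. E l (eta l)) = E i (eta i) * (E j (eta j) * (\<Prod>l\<in>?R. E l (eta l)))"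
      using ij' False by (simp add: prod.remove[of _ i] prod.remove[of _ j])
    moreover have "merge_rate mult_kernel ?u i j = real (Suc (eta i)) * real (Suc (eta j)) * (2 * real i * real j)"
      using False ij' by (simp add: merge_rate_def mult_kernel_def unmerge_def k_def[symmetric])
    ultimately show ?thesis
      using False unfolding k_def[symmetric] wk pk by (simp add: E_Suc field_simps del: of_nat_Suc)
  qed
qed

lemma weight_inflow:
  fixes t :: real
  assumes eta: "eta \<in> Omega N" and ij: "(i, j) \<in> merge_pairs N"
  defines "X \<equiv> \<lambda>i j. real i * real j * afun i t * afun j t * weight_partial N (i + j) eta t"
  shows "(\<Sum>z\<in>Omega N. weight N z t * (if merge z i j = eta then merge_rate mult_kernel z i j else 0))
       = (if i = j then X i i else X i j + X j i)"
proof (cases "eta (i + j) = 0")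
  case True
  then have "weight_partial N (i + j) eta t = 0" "weight_partial N (j + i) eta t = 0"
    by (simp_all add: weight_partial_def add.commute)
  with True show ?thesis
    unfolding sum_inflow_mult_kernel[OF eta ij] by (cases "i = j") (simp_all add: X_def)
next
  case False
  then have "i + j \<le> N"
    using Omega_outside_zero[OF eta, of "i + j"] by auto
  with False show ?thesis
    unfolding sum_inflow_mult_kernel[OF eta ij] by (simp add: weight_unmerge[OF ij] X_def add.commute mult_ac)
qed

lemma weight_forward_equation:
  assumes eta: "eta \<in> Omega N"
  shows "(\<Sum>z\<in>Omega N. weight N z t * generator mult_kernel N z eta) =
     ((\<Sum>k\<in>{1..N}. real (k^2) * real (eta k)) - (real N)^2) * weight N eta t
       + (\<Sum>k\<in>{1..N}. bconv k t * weight_partial N k eta t)"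
proof -
  define X where "X i j = real i * real j * afun i t * afun j t * weight_partial N (i + j) eta t" for i j
  have "(\<Sum>z\<in>Omega N. weight N z t * generator mult_kernel N z eta)
      = (\<Sum>(i,j)\<in>merge_pairs N. \<Sum>z\<in>Omega N.
            weight N z t * (if merge z i j = eta then merge_rate mult_kernel z i j else 0))
        - weight N eta t * (\<Sum>(i,j)\<in>merge_pairs N. merge_rate mult_kernel eta i j)"
    using eta Omega_finite[of N]
    by (simp add: generator_def right_diff_distrib sum_subtractf sum_distrib_left sum.swap[of _ "Omega N"]
        if_distrib[of "\<lambda>v. _ * v"] case_prod_beta' cong: if_cong)
  also have "(\<Sum>(i,j)\<in>merge_pairs N. \<Sum>z\<in>Omega N.
            weight N z t * (if merge z i j = eta then merge_rate mult_kernel z i j else 0))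
      = (\<Sum>(i,j)\<in>merge_pairs N. if i = j then X i i else X i j + X j i)"
    by (intro sum.cong refl) (auto simp: weight_inflow[OF eta] X_def)
  also have "\<dots> = (\<Sum>i\<in>{1..N}. \<Sum>j\<in>{1..N}. X i j)"
    by (rule sum_merge_pairs_symmetrize)
  also have "\<dots> = (\<Sum>k\<in>{1..N}. bconv k t * weight_partial N k eta t)"
  proof -
    have "weight_partial N k eta t = 0" if "N < k" for k
      using Omega_outside_zero[OF eta, of k] that by (simp add: weight_partial_def)
    from sum_square_by_sum_of_indices[where y = "\<lambda>i j. real i * real j * afun i t * afun j t", OF this]
    show ?thesis
      unfolding X_def bconv_eq_afun by (simp only: mult.assoc)
  qed
  finally show ?thesis
    by (simp add: total_merge_rate_mult_kernel[OF eta] algebra_simps)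
qed

lemma product_form_solves_forward_equation:
  assumes "eta \<in> Omega N" "x \<in> {0..T}"
  shows "((\<lambda>t. product_form N t eta) has_real_derivative
           (\<Sum>z\<in>Omega N. product_form N x z * generator mult_kernel N z eta)) (at x within {0..T})"
proof -
  have "(\<Sum>z\<in>Omega N. product_form N x z * generator mult_kernel N z eta)
      = fact N * exp (- ((real N)^2 * x)) * (\<Sum>z\<in>Omega N. weight N z x * generator mult_kernel N z eta)"
    unfolding product_form_def by (simp only: sum_distrib_left mult.assoc)
  also have "\<dots> = fact N * exp (- ((real N)^2 * x)) *
     (((\<Sum>k\<in>{1..N}. real (k^2) * real (eta k)) - (real N)^2) * weight N eta x
       + (\<Sum>k\<in>{1..N}. bconv k x * weight_partial N k eta x))"
    by (simp only: weight_forward_equation[OF assms(1)])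
  finally show ?thesis
    using product_form_has_real_derivative[OF assms(2)] by simp
qed

theorem mainTheorem6:
  fixes N :: nat and t :: real and eta :: "nat \<Rightarrow> nat"
  assumes "N \<ge> 1" and "t \<ge> 0" and "eta \<in> Omega N"
  shows "trans_prob (\<lambda>i j. 2 * real i * real j) N t (init_state N) eta
       = fact N * exp (- ((real N)^2 * t)) *
         (\<Prod>k=1..N. (bfun k t) ^ (eta k) / (real k ^ (eta k) * fact (eta k)))"
proof -
  have "product_form N t eta = trans_prob mult_kernel N t (init_state N) eta"
  proof (rule linear_system_unique[where p = "\<lambda>s e. product_form N s e"
        and q = "\<lambda>s e. trans_prob mult_kernel N s (init_state N) e" and Q = "generator mult_kernel N",
        OF \<open>t \<ge> 0\<close> Omega_finite _ _ _ assms(3)])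
    fix e x assume "e \<in> Omega N" "x \<in> {0..t}"
    then show "((\<lambda>s. product_form N s e) has_real_derivative
        (\<Sum>z\<in>Omega N. product_form N x z * generator mult_kernel N z e)) (at x within {0..t})"
      by (rule product_form_solves_forward_equation)
    show "((\<lambda>s. trans_prob mult_kernel N s (init_state N) e) has_real_derivative
        (\<Sum>z\<in>Omega N. trans_prob mult_kernel N x (init_state N) z * generator mult_kernel N z e))
        (at x within {0..t})"
      using init_state_in_Omega \<open>e \<in> Omega N\<close>
      by (intro has_field_derivative_at_within[OF trans_prob_forward_equation])
  next
    fix e assume "e \<in> Omega N"
    then show "product_form N 0 e = trans_prob mult_kernel N 0 (init_state N) e"
      by (simp add: product_form_0 trans_prob_0)
  qed
  moreover have "weight N eta t = (\<Prod>k=1..N. (bfun k t) ^ (eta k) / (real k ^ (eta k) * fact (eta k)))"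
    unfolding weight_def exp_term_def afun_def by (intro prod.cong refl) (simp add: power_divide)
  moreover have "(\<lambda>i j. 2 * real i * real j) = mult_kernel"
    by (simp add: fun_eq_iff mult_kernel_def)
  ultimately show ?thesis
    unfolding product_form_def by simp
qed

end
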